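(* Let $I$ be a nonempty finite set, $A$ a nonempty set, $\rho_i:A\to A$ maps ($i\in I$) with $\rho_i^2=\mathrm{id}$ for all $i$, and $C^a=(c^a_{ij})_{i,j\in I}\in\mathbb Z^{I\times I}$ ($a\in A$) with $c^a_{ii}=2$ for all $i\in I$, $a\in A$. For $a\in A$ let $R^a\subset\mathbb Z^I$ be subsets satisfying (R1)–(R4) below. Then $\mathcal C=(I,A,(\rho_i)_{i\in I},(C^a)_{a\in A})$ is a Cartan scheme and $(R^a)_{a\in A}$ is a root system of type $\mathcal C$. Here, with $\sigma_i^a\in\mathrm{End}(\mathbb Z^I)$ given by $\sigma_i^a(\alpha_j)=\alpha_j-c^a_{ij}\alpha_i$, $R^a_+=R^a\cap\mathbb N_0^I$ and $m^a_{i,j}=|R^a\cap(\mathbb N_0\alpha_i+\mathbb N_0\alpha_j)|$, the conditions are, for all $a\in A$, $i,j\in I$: (R1) $R^a=R^a_+\cup(-R^a_+)$; (R2) $R^a\cap\mathbb Z\alpha_i=\{\alpha_i,-\alpha_i\}$; (R3) $\sigma_i^a(R^a)=R^{\rho_i(a)}$; (R4) if $i\neq j$ and $m^a_{i,j}$ is finite then $(\rho_i\rho_j)^{m^a_{i,j}}(a)=a$.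
   Context: $\{\alpha_i\mid i\in I\}$ is the standard basis of $\mathbb Z^I$; $\mathbb N_0=\{0,1,2,\dots\}$. A generalized Cartan matrix is $C=(c_{ij})_{i,j\in I}\in\mathbb Z^{I\times I}$ with $c_{ii}=2$, $c_{jk}\le0$ for $j\ne k$, and $c_{ij}=0\Rightarrow c_{ji}=0$. A Cartan scheme $\mathcal C=\mathcal C(I,A,(\rho_i)_{i\in I},(C^a)_{a\in A})$ consists of a nonempty set $A$, maps $\rho_i:A\to A$ and generalized Cartan matrices $C^a$ such that (C1) $\rho_i^2=\mathrm{id}$ and (C2) $c^a_{ij}=c^{\rho_i(a)}_{ij}$ for all $a\in A$, $i,j\in I$. A root system of type $\mathcal C$ is a family $(R^a)_{a\in A}$ of subsets of $\mathbb Z^I$ satisfying (R1)–(R4) as in the claim. *)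

theory Defs
  imports Main
begin

text \<open>Conventions: the index set I is a finite type 'i (nonempty automatically),
  the set A is a type 'a (nonempty automatically). Elements of Z^I are
  functions 'i \<Rightarrow> int. rho i is the map rho_i, C a i j is c^a_{ij},
  R a is R^a.\<close>

definition alpha :: "'i \<Rightarrow> ('i \<Rightarrow> int)" where
  "alpha i = (\<lambda>k. if k = i then 1 else 0)"

text \<open>sigma_i^a: the linear endomorphism of Z^I with
  sigma(alpha_j) = alpha_j - c^a_{ij} alpha_i.\<close>
definition sigma :: "('a \<Rightarrow> 'i \<Rightarrow> 'i \<Rightarrow> int) \<Rightarrow> 'a \<Rightarrow> 'i \<Rightarrow> ('i::finite \<Rightarrow> int) \<Rightarrow> ('i \<Rightarrow> int)" where
  "sigma C a i v = (\<lambda>k. v k - (if k = i then (\<Sum>j\<in>UNIV. C a i j * v j) else 0))"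

definition pos_roots :: "('a \<Rightarrow> ('i \<Rightarrow> int) set) \<Rightarrow> 'a \<Rightarrow> ('i \<Rightarrow> int) set" where
  "pos_roots R a = R a \<inter> {v. \<forall>k. 0 \<le> v k}"

definition rank2_roots :: "('a \<Rightarrow> ('i \<Rightarrow> int) set) \<Rightarrow> 'a \<Rightarrow> 'i \<Rightarrow> 'i \<Rightarrow> ('i \<Rightarrow> int) set" where
  "rank2_roots R a i j =
     R a \<inter> {v. \<exists>m n :: nat. v = (\<lambda>k. int m * alpha i k + int n * alpha j k)}"

definition gen_cartan_matrix :: "('i \<Rightarrow> 'i \<Rightarrow> int) \<Rightarrow> bool" where
  "gen_cartan_matrix c \<longleftrightarrow>
     (\<forall>i. c i i = 2) \<and> (\<forall>j k. j \<noteq> k \<longrightarrow> c j k \<le> 0) \<and> (\<forall>i j. c i j = 0 \<longrightarrow> c j i = 0)"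

definition cartan_scheme :: "('i \<Rightarrow> 'a \<Rightarrow> 'a) \<Rightarrow> ('a \<Rightarrow> 'i \<Rightarrow> 'i \<Rightarrow> int) \<Rightarrow> bool" where
  "cartan_scheme rho C \<longleftrightarrow>
     (\<forall>a. gen_cartan_matrix (C a)) \<and>
     (\<forall>i a. rho i (rho i a) = a) \<and>
     (\<forall>a i j. C a i j = C (rho i a) i j)"

definition root_system_axioms ::
  "('i::finite \<Rightarrow> 'a \<Rightarrow> 'a) \<Rightarrow> ('a \<Rightarrow> 'i \<Rightarrow> 'i \<Rightarrow> int) \<Rightarrow> ('a \<Rightarrow> ('i \<Rightarrow> int) set) \<Rightarrow> bool" where
  "root_system_axioms rho C R \<longleftrightarrow>
     (\<forall>a. R a = pos_roots R a \<union> uminus ` pos_roots R a) \<and>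
     (\<forall>a i. R a \<inter> {v. \<exists>k::int. v = (\<lambda>l. k * alpha i l)} = {alpha i, - alpha i}) \<and>
     (\<forall>a i. sigma C a i ` R a = R (rho i a)) \<and>
     (\<forall>a i j. i \<noteq> j \<and> finite (rank2_roots R a i j) \<longrightarrow>
        ((rho i \<circ> rho j) ^^ card (rank2_roots R a i j)) a = a)"

definition root_system ::
  "('i::finite \<Rightarrow> 'a \<Rightarrow> 'a) \<Rightarrow> ('a \<Rightarrow> 'i \<Rightarrow> 'i \<Rightarrow> int) \<Rightarrow> ('a \<Rightarrow> ('i \<Rightarrow> int) set) \<Rightarrow> bool" where
  "root_system rho C R \<longleftrightarrow> cartan_scheme rho C \<and> root_system_axioms rho C R"

end

theory Submission
  imports Defs
begin

text \<open>By (R1) every root has all coordinates of one sign, and by (R2) the simple roots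
  are roots. For \<open>i \<noteq> j\<close>, (R3) sends a root \<open>p\<alpha>\<^sub>i + \<alpha>\<^sub>j\<close> of \<open>R\<^sup>a\<close> to the root
  \<open>(-p - c(a,i,j))\<alpha>\<^sub>i + \<alpha>\<^sub>j\<close> at \<open>\<rho>\<^sub>i a\<close>, so \<open>p + c(a,i,j) \<le> 0\<close>. With \<open>p = 0\<close> this gives
  \<open>c(a,i,j) \<le> 0\<close>; with the root \<open>\<alpha>\<^sub>j - c(\<rho>\<^sub>i a,i,j)\<alpha>\<^sub>i\<close> of \<open>R\<^sup>a\<close> (the image of \<open>\<alpha>\<^sub>j\<close> under
  \<open>\<sigma>\<^sub>i\<close> at \<open>\<rho>\<^sub>i a\<close>) it gives \<open>c(a,i,j) \<le> c(\<rho>\<^sub>i a,i,j)\<close>, hence (C2) since \<open>\<rho>\<^sub>i\<close> is an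
  involution. If \<open>c(a,i,j) = 0\<close>, then \<open>\<sigma>\<^sub>i\<close> sends the root \<open>\<alpha>\<^sub>i - c(a,j,i)\<alpha>\<^sub>j\<close> to
  \<open>-\<alpha>\<^sub>i - c(a,j,i)\<alpha>\<^sub>j\<close>, which forces \<open>c(a,j,i) \<ge> 0\<close>.\<close>

definition comb2 :: "'i \<Rightarrow> 'i \<Rightarrow> int \<Rightarrow> int \<Rightarrow> 'i \<Rightarrow> int" where
  "comb2 i j p q = (\<lambda>l. p * alpha i l + q * alpha j l)"

lemma comb2_swap: "comb2 i j p q = comb2 j i q p"
  by (auto simp: comb2_def)

lemma comb2_eq_alpha [simp]: "comb2 i j 0 1 = alpha j"
  by (simp add: comb2_def)

lemma comb2_apply_fst: "i \<noteq> j \<Longrightarrow> comb2 i j p q i = p"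
  and comb2_apply_snd: "i \<noteq> j \<Longrightarrow> comb2 i j p q j = q"
  by (auto simp: comb2_def alpha_def)

lemma sum_mult_comb2:
  fixes c :: "'i::finite \<Rightarrow> int"
  assumes "i \<noteq> j"
  shows "(\<Sum>l\<in>UNIV. c l * comb2 i j p q l) = c i * p + c j * q"
proof -
  have "(\<Sum>l\<in>UNIV. c l * comb2 i j p q l)
      = (\<Sum>l\<in>UNIV. if l = i then c l * p else 0) + (\<Sum>l\<in>UNIV. if l = j then c l * q else 0)"
    unfolding sum.distrib[symmetric]
    by (rule sum.cong) (auto simp: comb2_def alpha_def assms)
  then show ?thesis by simp
qed

lemma sigma_comb2:
  fixes C :: "'a \<Rightarrow> 'i::finite \<Rightarrow> 'i \<Rightarrow> int"
  assumes "i \<noteq> j"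
  shows "sigma C a i (comb2 i j p q) = comb2 i j (p - C a i i * p - C a i j * q) q"
  unfolding sigma_def sum_mult_comb2[OF assms]
  using assms by (auto simp: comb2_def alpha_def algebra_simps)

lemma root_system_axiomsD:
  assumes "root_system_axioms rho C R"
  shows "R a = pos_roots R a \<union> uminus ` pos_roots R a"
    and "R a \<inter> {v. \<exists>k::int. v = (\<lambda>l. k * alpha i l)} = {alpha i, - alpha i}"
    and "sigma C a i ` R a = R (rho i a)"
  using assms unfolding root_system_axioms_def by meson+

lemma roots_sign_coherent:
  assumes "root_system_axioms rho C R" and "v \<in> R a" and "0 < v k"
  shows "0 \<le> v l"
proof -
  from assms(2) consider "\<forall>m. 0 \<le> v m" | w where "v = - w" "\<forall>m. 0 \<le> w m"
    by (subst (asm) root_system_axiomsD(1)[OF assms(1)]) (auto simp: pos_roots_def)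
  then show ?thesis
  proof cases
    case 2
    with assms(3) have "w k < 0" by simp
    with 2(2) show ?thesis by (meson not_less)
  qed simp
qed

lemma alpha_in_roots:
  assumes "root_system_axioms rho C R"
  shows "alpha i \<in> R a"
  using root_system_axiomsD(2)[OF assms, of a i] by blast

lemma sigma_in_roots:
  assumes "root_system_axioms rho C R" and "v \<in> R a"
  shows "sigma C a i v \<in> R (rho i a)"
  using root_system_axiomsD(3)[OF assms(1), of a i] assms(2) by blast

context
  fixes rho :: "'i::finite \<Rightarrow> 'a \<Rightarrow> 'a"
    and C :: "'a \<Rightarrow> 'i \<Rightarrow> 'i \<Rightarrow> int"
    and R :: "'a \<Rightarrow> ('i \<Rightarrow> int) set"
  assumes diag: "\<And>a i. C a i i = 2"
    and roots: "root_system_axioms rho C R"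
begin

lemma comb2_simple_root_in_roots: "comb2 i j 0 1 \<in> R a"
  using alpha_in_roots[OF roots] by simp

lemma sigma_comb2_in_roots:
  assumes "i \<noteq> j" and "comb2 i j p q \<in> R a"
  shows "comb2 i j (- p - C a i j * q) q \<in> R (rho i a)"
  using sigma_in_roots[OF roots assms(2), of i] by (simp add: sigma_comb2[OF assms(1)] diag)

lemma comb2_root_coeff_bound:
  assumes "i \<noteq> j" and "comb2 i j p 1 \<in> R a"
  shows "p + C a i j \<le> 0"
proof -
  have "comb2 i j (- p - C a i j) 1 \<in> R (rho i a)"
    using sigma_comb2_in_roots[OF assms] by simp
  from roots_sign_coherent[OF roots this, of j i] show ?thesis
    using assms(1) by (simp add: comb2_apply_fst comb2_apply_snd)
qed

lemma cartan_offdiag_nonpos: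
  assumes "i \<noteq> j"
  shows "C a i j \<le> 0"
  using comb2_root_coeff_bound[OF assms comb2_simple_root_in_roots] by simp

lemma cartan_le_rho:
  assumes rho_inv: "\<And>i a. rho i (rho i a) = a" and "i \<noteq> j"
  shows "C a i j \<le> C (rho i a) i j"
proof -
  have "comb2 i j (- C (rho i a) i j) 1 \<in> R a"
    using sigma_comb2_in_roots[OF assms(2) comb2_simple_root_in_roots, of "rho i a"]
    by (simp add: rho_inv)
  from comb2_root_coeff_bound[OF assms(2) this] show ?thesis by simp
qed

lemma cartan_rho_invariant:
  assumes rho_inv: "\<And>i a. rho i (rho i a) = a"
  shows "C a i j = C (rho i a) i j"
proof (cases "i = j")
  case True
  then show ?thesis by (simp add: diag)
next
  case False
  from cartan_le_rho[OF rho_inv False, of a] cartan_le_rho[OF rho_inv False, of "rho i a"]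
  show ?thesis
    by (simp add: rho_inv)
qed

lemma cartan_zero_sym:
  assumes rho_inv: "\<And>i a. rho i (rho i a) = a" and "C a i j = 0"
  shows "C a j i = 0"
proof (cases "i = j")
  case True
  with assms(2) show ?thesis by simp
next
  case False
  have "comb2 j i (- C a j i) 1 \<in> R a"
    using sigma_comb2_in_roots[OF not_sym[OF False] comb2_simple_root_in_roots, of "rho j a"]
      cartan_rho_invariant[OF rho_inv, of a j i]
    by (simp add: rho_inv)
  then have "comb2 i j 1 (- C a j i) \<in> R a"
    by (simp add: comb2_swap[of j i])
  from sigma_comb2_in_roots[OF False this] assms(2)
  have "comb2 i j (-1) (- C a j i) \<in> R (rho i a)"
    by simp
  from roots_sign_coherent[OF roots this, of j i] False
  have "\<not> 0 < - C a j i" by (auto simp: comb2_apply_fst comb2_apply_snd)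
  then have "0 \<le> C a j i" by simp
  with cartan_offdiag_nonpos[OF not_sym[OF False], of a] show ?thesis by simp
qed

end

theorem lemma2p5:
  fixes rho :: "'i::finite \<Rightarrow> 'a \<Rightarrow> 'a"
    and C :: "'a \<Rightarrow> 'i \<Rightarrow> 'i \<Rightarrow> int"
    and R :: "'a \<Rightarrow> ('i \<Rightarrow> int) set"
  assumes rho_inv: "\<And>i a. rho i (rho i a) = a"
    and diag: "\<And>a i. C a i i = 2"
    and roots: "root_system_axioms rho C R"
  shows "cartan_scheme rho C \<and> root_system rho C R"
proof -
  have "gen_cartan_matrix (C a)" for a
    unfolding gen_cartan_matrix_def
    using diag cartan_offdiag_nonpos[OF diag roots] cartan_zero_sym[OF diag roots rho_inv]
    by blast
  then have "cartan_scheme rho C"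
    unfolding cartan_scheme_def using rho_inv cartan_rho_invariant[OF diag roots rho_inv] by blast
  with roots show ?thesis by (simp add: root_system_def)
qed

end
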